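(* Let $k\ge1$ and let $G$ be a finite $k$-connected graph with $\mathrm{Ent}(G)=k$. Then $G$ is an abstract $k$-molecule.
   Context: Graphs are finite and undirected. A graph is $k$-connected if one must remove at least $k$ vertices to disconnect it; the connectivity is the largest such $k$ (by convention the complete graph $K_m$, $m\ge3$, has connectivity $m-1$). $k$-molecule: for $k,h\ge1$, $B_k=\{b_1,\dots,b_k\}$ and a set $\mathcal B$ of edges among vertices of $B_k$, the $k$-molecule $\vartheta_{B_k}^{\mathcal B,h}$ has vertex set $B_k\cup\{v_1,\dots,v_h\}$ and edge set $\mathcal B\cup\{v_ib_j:1\le i\le h,1\le j\le k\}$, with the requirement $h\ge k-k'$ where $k'$ is the connectivity of the subgraph induced by $B_k$. A graph $G$ is an abstract $k$-molecule if there are $B\subseteq V_G$ with $|B|=k$, a $k$-molecule $\vartheta_{B_k}^{\mathcal B,h}$ and an isomorphism $G\to\vartheta_{B_k}^{\mathcal B,h}$ mapping $B$ onto $B_k$. Entanglement: in the game $\mathrm{Ent}(G,k)$ Thief plays against $k$ cops on $G$. Initially no cop is placed and Thief picks a vertex. Each round, Cops may do nothing, place a new cop (at most $k$ in total) on Thief's current vertex, or move a placed cop to Thief's current vertex; then Thief must move along an edge to an adjacent vertex not occupied by a cop, and is caught (Cops win) if he cannot. Infinite plays are won by Thief. $\mathrm{Ent}(G)$ is the least $k$ for which Cops have a winning strategy. *)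

theory Defs
  imports Main
begin

definition graph :: "'a set \<Rightarrow> ('a \<Rightarrow> 'a \<Rightarrow> bool) \<Rightarrow> bool" where
  "graph V E \<longleftrightarrow> (\<forall>x y. E x y \<longrightarrow> x \<in> V \<and> y \<in> V \<and> x \<noteq> y \<and> E y x)"

definition connected_on :: "'a set \<Rightarrow> ('a \<Rightarrow> 'a \<Rightarrow> bool) \<Rightarrow> bool" where
  "connected_on S E \<longleftrightarrow> S \<noteq> {} \<and>
     (\<forall>x\<in>S. \<forall>y\<in>S. (\<lambda>a b. E a b \<and> a \<in> S \<and> b \<in> S)\<^sup>*\<^sup>* x y)"

text \<open>k-connected: more than k vertices, and removing fewer than k vertices
leaves a connected graph (so K_m has connectivity m-1).\<close>
definition k_connected :: "'a set \<Rightarrow> ('a \<Rightarrow> 'a \<Rightarrow> bool) \<Rightarrow> nat \<Rightarrow> bool" where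
  "k_connected V E k \<longleftrightarrow> card V > k \<and>
     (\<forall>X. X \<subseteq> V \<and> card X < k \<longrightarrow> connected_on (V - X) E)"

definition connectivity :: "'a set \<Rightarrow> ('a \<Rightarrow> 'a \<Rightarrow> bool) \<Rightarrow> nat" where
  "connectivity V E = (GREATEST k. k_connected V E k)"

text \<open>Vertices b_j are Inl j (1 \<le> j \<le> k), vertices v_i are Inr i (1 \<le> i \<le> h).
The set \<B> of edges among B_k is a set of 2-element subsets of {1..k}.\<close>

definition mol_V :: "nat \<Rightarrow> nat \<Rightarrow> (nat + nat) set" where
  "mol_V k h = Inl ` {1..k} \<union> Inr ` {1..h}"

definition mol_E :: "nat \<Rightarrow> nat \<Rightarrow> nat set set \<Rightarrow> (nat + nat) \<Rightarrow> (nat + nat) \<Rightarrow> bool" where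
  "mol_E k h Bs x y = (case (x, y) of
      (Inl a, Inl b) \<Rightarrow> a \<noteq> b \<and> {a, b} \<in> Bs
    | (Inl a, Inr i) \<Rightarrow> a \<in> {1..k} \<and> i \<in> {1..h}
    | (Inr i, Inl a) \<Rightarrow> a \<in> {1..k} \<and> i \<in> {1..h}
    | (Inr _, Inr _) \<Rightarrow> False)"

definition edges_among :: "nat \<Rightarrow> nat set set \<Rightarrow> bool" where
  "edges_among k Bs \<longleftrightarrow> (\<forall>e\<in>Bs. \<exists>a b. e = {a, b} \<and> a \<noteq> b \<and> a \<in> {1..k} \<and> b \<in> {1..k})"

definition is_molecule :: "nat \<Rightarrow> nat \<Rightarrow> nat set set \<Rightarrow> bool" where
  "is_molecule k h Bs \<longleftrightarrow> k \<ge> 1 \<and> h \<ge> 1 \<and> edges_among k Bs \<and>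
     h \<ge> k - connectivity (Inl ` {1..k}) (mol_E k h Bs)"

definition abstract_molecule :: "'a set \<Rightarrow> ('a \<Rightarrow> 'a \<Rightarrow> bool) \<Rightarrow> nat \<Rightarrow> bool" where
  "abstract_molecule V E k \<longleftrightarrow>
     (\<exists>B Bs h f. B \<subseteq> V \<and> card B = k \<and> is_molecule k h Bs \<and>
        bij_betw f V (mol_V k h) \<and>
        (\<forall>x\<in>V. \<forall>y\<in>V. E x y \<longleftrightarrow> mol_E k h Bs (f x) (f y)) \<and>
        f ` B = Inl ` {1..k})"

text \<open>Cops always occupy distinct vertices, so the number of placed cops is card C.\<close>
definition cop_move :: "nat \<Rightarrow> 'a set \<Rightarrow> 'a \<Rightarrow> 'a set \<Rightarrow> bool" where
  "cop_move k C v C' \<longleftrightarrow> C' = C \<or> (card C < k \<and> C' = insert v C) \<or>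
     (\<exists>c\<in>C. C' = insert v (C - {c}))"

text \<open>A cop strategy maps the (nonempty) history of thief positions
[x_0,...,x_n] (x_n current) to the new cop placement.\<close>

definition consistent_hist :: "'a set \<Rightarrow> ('a \<Rightarrow> 'a \<Rightarrow> bool) \<Rightarrow> ('a list \<Rightarrow> 'a set) \<Rightarrow> 'a list \<Rightarrow> bool" where
  "consistent_hist V E \<sigma> xs \<longleftrightarrow> xs \<noteq> [] \<and> xs ! 0 \<in> V \<and>
     (\<forall>i. Suc i < length xs \<longrightarrow> E (xs ! i) (xs ! Suc i) \<and> xs ! Suc i \<notin> \<sigma> (take (Suc i) xs))"

definition prev_cops :: "('a list \<Rightarrow> 'a set) \<Rightarrow> 'a list \<Rightarrow> 'a set" where
  "prev_cops \<sigma> xs = (if length xs \<le> 1 then {} else \<sigma> (butlast xs))"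

definition legal_strategy :: "'a set \<Rightarrow> ('a \<Rightarrow> 'a \<Rightarrow> bool) \<Rightarrow> nat \<Rightarrow> ('a list \<Rightarrow> 'a set) \<Rightarrow> bool" where
  "legal_strategy V E k \<sigma> \<longleftrightarrow> (\<forall>xs. consistent_hist V E \<sigma> xs \<longrightarrow>
      cop_move k (prev_cops \<sigma> xs) (last xs) (\<sigma> xs))"

definition thief_escapes :: "'a set \<Rightarrow> ('a \<Rightarrow> 'a \<Rightarrow> bool) \<Rightarrow> ('a list \<Rightarrow> 'a set) \<Rightarrow> bool" where
  "thief_escapes V E \<sigma> \<longleftrightarrow> (\<exists>p :: nat \<Rightarrow> 'a. p 0 \<in> V \<and>
      (\<forall>i. E (p i) (p (Suc i)) \<and> p (Suc i) \<notin> \<sigma> (map p [0..<Suc i])))"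

definition cops_win :: "'a set \<Rightarrow> ('a \<Rightarrow> 'a \<Rightarrow> bool) \<Rightarrow> nat \<Rightarrow> bool" where
  "cops_win V E k \<longleftrightarrow> (\<exists>\<sigma>. legal_strategy V E k \<sigma> \<and> \<not> thief_escapes V E \<sigma>)"

definition entanglement :: "'a set \<Rightarrow> ('a \<Rightarrow> 'a \<Rightarrow> bool) \<Rightarrow> nat" where
  "entanglement V E = (LEAST k. cops_win V E k)"

end

theory Submission
  imports Defs
begin

text \<open>If some vertex s has exactly k neighbours and every vertex outside its neighbourhood
N(s) has the same neighbourhood as s, then G is the k-molecule with B = N(s) whose vertices
v_i are s and its twins; removing the h twins from the k-connected G shows that B induces a
(k - h)-connected graph, which is the side condition h \<ge> k - k'.

Otherwise the thief escapes k cops forever. He keeps the invariant that he stands on a cop or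
the cops do not occupy exactly his neighbourhood. Since every degree is at least k, he can
always step to a free neighbour whose neighbourhood is not the cop set C. The only hard case
is |C| = k with the thief on a cop y and every free neighbour of y seeing exactly C: then the
vertices seeing exactly C, together with the cops all of whose neighbours are cops or such
vertices, form a set closed under edges in G minus the remaining fewer than k cops, which is
connected; so every vertex is a cop or a twin seeing exactly C, and we are in the first case.\<close>

section \<open>Graphs and connectivity\<close>

definition neighbours :: "('a \<Rightarrow> 'a \<Rightarrow> bool) \<Rightarrow> 'a \<Rightarrow> 'a set" where
  "neighbours E v = {w. E v w}"

lemma graph_sym: "graph V E \<Longrightarrow> E x y \<Longrightarrow> E y x"
  by (auto simp: graph_def)

lemma graph_irrefl: "graph V E \<Longrightarrow> \<not> E x x"
  by (auto simp: graph_def)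

lemma graph_edge_in: "graph V E \<Longrightarrow> E x y \<Longrightarrow> x \<in> V \<and> y \<in> V"
  by (auto simp: graph_def)

lemma neighbours_subset: "graph V E \<Longrightarrow> neighbours E v \<subseteq> V"
  by (auto simp: graph_def neighbours_def)

lemma not_in_neighbours: "graph V E \<Longrightarrow> v \<notin> neighbours E v"
  by (auto simp: graph_def neighbours_def)

lemma k_connected_card: "k_connected V E k \<Longrightarrow> k < card V"
  by (simp add: k_connected_def)

lemma k_connected_finite: "k_connected V E k \<Longrightarrow> finite V"
  using card.infinite k_connected_card by fastforce

lemma k_connected_connected_on:
  "k_connected V E k \<Longrightarrow> X \<subseteq> V \<Longrightarrow> card X < k \<Longrightarrow> connected_on (V - X) E"
  by (simp add: k_connected_def)

lemma connected_on_subset_closed: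
  assumes "connected_on A E" "a \<in> A" "a \<in> P"
    and closed: "\<And>x y. x \<in> A \<Longrightarrow> x \<in> P \<Longrightarrow> y \<in> A \<Longrightarrow> E x y \<Longrightarrow> y \<in> P"
  shows "A \<subseteq> P"
proof
  fix b assume "b \<in> A"
  with assms(1,2) have "(\<lambda>x y. E x y \<and> x \<in> A \<and> y \<in> A)\<^sup>*\<^sup>* a b"
    by (simp add: connected_on_def)
  then show "b \<in> P"
  proof (induction rule: rtranclp_induct)
    case base
    show ?case using assms(3) .
  next
    case (step x y)
    then show ?case using closed by blast
  qed
qed

lemma connected_on_image:
  assumes "connected_on A E" and hom: "\<And>x y. x \<in> A \<Longrightarrow> y \<in> A \<Longrightarrow> E x y \<Longrightarrow> R (f x) (f y)"
  shows "connected_on (f ` A) R"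
  unfolding connected_on_def
proof (intro conjI ballI)
  show "f ` A \<noteq> {}" using assms(1) by (simp add: connected_on_def)
  fix x' y' assume "x' \<in> f ` A" "y' \<in> f ` A"
  then obtain x y where xy: "x \<in> A" "y \<in> A" "x' = f x" "y' = f y" by blast
  have "(\<lambda>a b. E a b \<and> a \<in> A \<and> b \<in> A)\<^sup>*\<^sup>* x y"
    using assms(1) xy by (simp add: connected_on_def)
  then have "(\<lambda>a b. R a b \<and> a \<in> f ` A \<and> b \<in> f ` A)\<^sup>*\<^sup>* (f x) (f y)"
  proof (induction rule: rtranclp_induct)
    case (step a b)
    then show ?case
      by (auto intro!: rtranclp.rtrancl_into_rtrancl[OF step.IH] hom)
  qed simp
  then show "(\<lambda>a b. R a b \<and> a \<in> f ` A \<and> b \<in> f ` A)\<^sup>*\<^sup>* x' y'"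
    using xy by simp
qed

lemma card_neighbours_ge:
  assumes g: "graph V E" and kc: "k_connected V E k" and y: "y \<in> V"
  shows "k \<le> card (neighbours E y)"
proof (rule ccontr)
  let ?N = "neighbours E y"
  assume "\<not> k \<le> card ?N"
  then have conn: "connected_on (V - ?N) E"
    using k_connected_connected_on[OF kc neighbours_subset[OF g]] by simp
  have y_in: "y \<in> V - ?N" using y not_in_neighbours[OF g] by blast
  have "V - ?N \<subseteq> {y}"
    by (rule connected_on_subset_closed[OF conn y_in]) (auto simp: neighbours_def)
  then have "card (V - ?N) \<le> 1"
    using card_mono[of "{y}"] by simp
  moreover have "card (V - ?N) = card V - card ?N"
    using card_Diff_subset neighbours_subset[OF g]
      finite_subset[OF neighbours_subset[OF g] k_connected_finite[OF kc]] by metis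
  ultimately show False
    using \<open>\<not> k \<le> card ?N\<close> k_connected_card[OF kc] by linarith
qed

lemma k_connected_iso:
  assumes bij: "bij_betw f A B" and hom: "\<And>x y. x \<in> A \<Longrightarrow> y \<in> A \<Longrightarrow> E x y \<Longrightarrow> R (f x) (f y)"
    and kc: "k_connected A E j"
  shows "k_connected B R j"
  unfolding k_connected_def
proof (intro conjI allI impI)
  show "j < card B" using bij_betw_same_card[OF bij] k_connected_card[OF kc] by simp
  fix X assume X: "X \<subseteq> B \<and> card X < j"
  define X0 where "X0 = A \<inter> f -` X"
  have X0: "bij_betw f X0 X"
    using X bij unfolding X0_def by (auto simp: bij_betw_def inj_on_def)
  then have "card X0 < j" using X bij_betw_same_card by metis
  then have "connected_on (A - X0) E"
    using k_connected_connected_on[OF kc] by (simp add: X0_def)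
  then have "connected_on (f ` (A - X0)) R"
    by (rule connected_on_image) (use hom in auto)
  moreover have "f ` (A - X0) = B - X"
    using bij X0 inj_on_image_set_diff[of f A A X0]
    by (simp add: bij_betw_def X0_def)
  ultimately show "connected_on (B - X) R" by simp
qed

lemma k_connected_Diff:
  assumes kc: "k_connected V E k" and S: "S \<subseteq> V" "card S \<le> k"
  shows "k_connected (V - S) E (k - card S)"
  unfolding k_connected_def
proof (intro conjI allI impI)
  have "finite S" using S(1) k_connected_finite[OF kc] finite_subset by blast
  then show "k - card S < card (V - S)"
    using card_Diff_subset[OF _ S(1)] k_connected_card[OF kc] S(2) by simp
  fix X assume X: "X \<subseteq> V - S \<and> card X < k - card S"
  then have "card (X \<union> S) < k" using card_Un_le[of X S] by linarith
  then have "connected_on (V - (X \<union> S)) E"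
    using k_connected_connected_on[OF kc] X S(1) by blast
  moreover have "V - (X \<union> S) = V - S - X" by blast
  ultimately show "connected_on (V - S - X) E" by simp
qed

lemma k_connected_le_connectivity:
  assumes "k_connected V E j"
  shows "j \<le> connectivity V E"
  using assms k_connected_card unfolding connectivity_def
  by (metis Greatest_le_nat less_imp_le_nat)

section \<open>Molecules\<close>

definition sum_labelling :: "'a set \<Rightarrow> ('a \<Rightarrow> nat) \<Rightarrow> ('a \<Rightarrow> nat) \<Rightarrow> 'a \<Rightarrow> nat + nat" where
  "sum_labelling H iH iS x = (if x \<in> H then Inl (iH x) else Inr (iS x))"

definition labelled_edges :: "'a set \<Rightarrow> ('a \<Rightarrow> nat) \<Rightarrow> ('a \<Rightarrow> 'a \<Rightarrow> bool) \<Rightarrow> nat set set" where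
  "labelled_edges H iH E = {{iH a, iH b} | a b. a \<in> H \<and> b \<in> H \<and> E a b}"

lemma sum_labelling_image:
  assumes "bij_betw iH H {1..k}"
  shows "sum_labelling H iH iS ` H = Inl ` {1..k}"
proof -
  have "sum_labelling H iH iS ` H = Inl ` iH ` H"
    by (auto simp: sum_labelling_def)
  then show ?thesis using assms by (simp add: bij_betw_def)
qed

lemma bij_betw_sum_labelling:
  assumes "H \<subseteq> V" "bij_betw iH H {1..k}" "bij_betw iS (V - H) {1..h}"
  shows "bij_betw (sum_labelling H iH iS) V (mol_V k h)"
proof -
  let ?f = "sum_labelling H iH iS"
  have "bij_betw (Inl \<circ> iH) H (Inl ` {1..k})" "bij_betw (Inr \<circ> iS) (V - H) (Inr ` {1..h})"
    using bij_betw_trans[OF assms(2) bij_betw_imageI[OF inj_Inl refl]]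
      bij_betw_trans[OF assms(3) bij_betw_imageI[OF inj_Inr refl]] by simp_all
  then have "bij_betw ?f H (Inl ` {1..k})" "bij_betw ?f (V - H) (Inr ` {1..h})"
    using bij_betw_cong[of H ?f "Inl \<circ> iH"] bij_betw_cong[of "V - H" ?f "Inr \<circ> iS"]
    by (simp_all add: sum_labelling_def)
  then have "bij_betw ?f (H \<union> (V - H)) (Inl ` {1..k} \<union> Inr ` {1..h})"
    by (rule bij_betw_combine) auto
  then show ?thesis
    using assms(1) by (simp add: mol_V_def Un_absorb1)
qed

lemma mol_E_sum_labelling:
  assumes g: "graph V E" and H: "H \<subseteq> V" and iH: "bij_betw iH H {1..k}"
    and iS: "bij_betw iS (V - H) {1..h}"
    and twins: "\<And>v. v \<in> V - H \<Longrightarrow> neighbours E v = H"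
    and xy: "x \<in> V" "y \<in> V"
  shows "E x y \<longleftrightarrow> mol_E k h (labelled_edges H iH E) (sum_labelling H iH iS x) (sum_labelling H iH iS y)"
proof (cases "x \<in> H"; cases "y \<in> H")
  assume x: "x \<in> H" and y: "y \<in> H"
  have inj: "inj_on iH H" using iH by (simp add: bij_betw_def)
  have "E x y \<longleftrightarrow> iH x \<noteq> iH y \<and> {iH x, iH y} \<in> labelled_edges H iH E"
  proof
    assume "E x y"
    then have "iH x \<noteq> iH y"
      using graph_irrefl[OF g] inj x y by (metis inj_on_eq_iff)
    with \<open>E x y\<close> show "iH x \<noteq> iH y \<and> {iH x, iH y} \<in> labelled_edges H iH E"
      unfolding labelled_edges_def using x y by blast
  next
    assume "iH x \<noteq> iH y \<and> {iH x, iH y} \<in> labelled_edges H iH E"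
    then obtain a b where ab: "a \<in> H" "b \<in> H" "E a b" "{iH x, iH y} = {iH a, iH b}"
      unfolding labelled_edges_def by blast
    then have "(x = a \<and> y = b) \<or> (x = b \<and> y = a)"
      using inj x y by (simp add: doubleton_eq_iff inj_on_eq_iff)
    then show "E x y"
      using ab(3) graph_sym[OF g] by blast
  qed
  then show ?thesis
    using x y by (simp add: sum_labelling_def mol_E_def)
next
  assume "x \<in> H" "y \<notin> H"
  moreover have "E x y"
    using twins[of y] xy \<open>x \<in> H\<close> \<open>y \<notin> H\<close> graph_sym[OF g] by (auto simp: neighbours_def)
  ultimately show ?thesis
    using bij_betw_apply[OF iH] bij_betw_apply[OF iS] xy by (simp add: sum_labelling_def mol_E_def)
next
  assume "x \<notin> H" "y \<in> H"
  moreover have "E x y"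
    using twins[of x] xy \<open>x \<notin> H\<close> \<open>y \<in> H\<close> by (auto simp: neighbours_def)
  ultimately show ?thesis
    using bij_betw_apply[OF iH] bij_betw_apply[OF iS] xy by (simp add: sum_labelling_def mol_E_def)
next
  assume "x \<notin> H" "y \<notin> H"
  moreover have "\<not> E x y"
    using twins[of x] xy \<open>x \<notin> H\<close> \<open>y \<notin> H\<close> by (auto simp: neighbours_def)
  ultimately show ?thesis
    by (simp add: sum_labelling_def mol_E_def)
qed

lemma edges_among_labelled_edges:
  assumes g: "graph V E" and iH: "bij_betw iH H {1..k}"
  shows "edges_among k (labelled_edges H iH E)"
  unfolding edges_among_def labelled_edges_def
proof clarify
  fix a b assume "a \<in> H" "b \<in> H" "E a b"
  moreover have "inj_on iH H" using iH by (simp add: bij_betw_def)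
  ultimately show "\<exists>c d. {iH a, iH b} = {c, d} \<and> c \<noteq> d \<and> c \<in> {1..k} \<and> d \<in> {1..k}"
    using graph_irrefl[OF g] bij_betw_apply[OF iH] by (metis inj_on_eq_iff)
qed

lemma abstract_molecule_if_common_neighbours:
  assumes g: "graph V E" and kc: "k_connected V E k" and k1: "1 \<le> k"
    and H: "H \<subseteq> V" "card H = k" and S: "V - H \<noteq> {}"
    and twins: "\<And>v. v \<in> V - H \<Longrightarrow> neighbours E v = H"
  shows "abstract_molecule V E k"
proof -
  define h where "h = card (V - H)"
  have fin: "finite V" using k_connected_finite[OF kc] .
  have h1: "1 \<le> h" using S fin by (simp add: h_def Suc_le_eq card_gt_0_iff)
  have "finite H" "card H = card {1..k}" using H fin finite_subset by auto
  then obtain iH where iH: "bij_betw iH H {1..k}"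
    using finite_same_card_bij by blast
  have "finite (V - H)" "card (V - H) = card {1..h}" using fin by (simp_all add: h_def)
  then obtain iS where iS: "bij_betw iS (V - H) {1..h}"
    using finite_same_card_bij by blast
  define f where "f = sum_labelling H iH iS"
  define Bs where "Bs = labelled_edges H iH E"
  have f_bij: "bij_betw f V (mol_V k h)"
    unfolding f_def using bij_betw_sum_labelling[OF H(1) iH iS] .
  have f_H: "f ` H = Inl ` {1..k}"
    unfolding f_def using sum_labelling_image[OF iH] .
  have f_edges: "E x y \<longleftrightarrow> mol_E k h Bs (f x) (f y)" if "x \<in> V" "y \<in> V" for x y
    unfolding f_def Bs_def using mol_E_sum_labelling[OF g H(1) iH iS twins that] .
  have "k - h \<le> connectivity (Inl ` {1..k}) (mol_E k h Bs)"
  proof (cases "h < k")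
    case True
    have "V - (V - H) = H" using H(1) by blast
    then have "k_connected H E (k - h)"
      using k_connected_Diff[OF kc, of "V - H"] True by (simp add: h_def)
    moreover have "bij_betw f H (Inl ` {1..k})"
      using f_bij H(1) f_H by (auto simp: bij_betw_def intro: inj_on_subset)
    ultimately have "k_connected (Inl ` {1..k}) (mol_E k h Bs) (k - h)"
      using k_connected_iso f_edges H(1) by blast
    then show ?thesis by (rule k_connected_le_connectivity)
  qed simp
  then have "is_molecule k h Bs"
    unfolding is_molecule_def Bs_def using k1 h1 edges_among_labelled_edges[OF g iH] by simp
  then show ?thesis
    unfolding abstract_molecule_def using H f_bij f_edges f_H by blast
qed

text \<open>In the molecule, s is one of the v_i: B_k is the neighbourhood of s and the other v_i
are the twins of s.\<close>
definition molecule_centre :: "'a set \<Rightarrow> ('a \<Rightarrow> 'a \<Rightarrow> bool) \<Rightarrow> nat \<Rightarrow> 'a \<Rightarrow> bool" where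
  "molecule_centre V E k s \<longleftrightarrow> s \<in> V \<and> card (neighbours E s) = k \<and>
     (\<forall>v\<in>V. v \<in> neighbours E s \<or> neighbours E v = neighbours E s)"

lemma abstract_molecule_if_centre:
  assumes "graph V E" "k_connected V E k" "1 \<le> k" "molecule_centre V E k s"
  shows "abstract_molecule V E k"
proof (rule abstract_molecule_if_common_neighbours[OF assms(1-3)])
  show "neighbours E s \<subseteq> V" "card (neighbours E s) = k"
    using assms(4) neighbours_subset[OF assms(1)] by (auto simp: molecule_centre_def)
  show "V - neighbours E s \<noteq> {}"
    using assms(4) not_in_neighbours[OF assms(1)] by (auto simp: molecule_centre_def)
  show "neighbours E v = neighbours E s" if "v \<in> V - neighbours E s" for v
    using assms(4) that by (auto simp: molecule_centre_def)
qed

section \<open>The entanglement game\<close>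

lemma cop_move_cases: "cop_move k C v C' \<Longrightarrow> C' = C \<or> v \<in> C'"
  by (auto simp: cop_move_def)

lemma cop_move_card_le:
  assumes "cop_move k C v C'" "finite C" "card C \<le> k"
  shows "finite C' \<and> card C' \<le> k"
  using assms(1) unfolding cop_move_def
proof (elim disjE conjE bexE)
  fix c assume c: "c \<in> C" "C' = insert v (C - {c})"
  then have "0 < k" using assms(2,3) card_gt_0_iff by fastforce
  then show ?thesis
    using c assms(2,3) card_insert_le_m1[of k "C - {c}" v] by (simp add: card_Diff_singleton)
qed (use assms(2,3) in \<open>auto simp: card_insert_if\<close>)

lemma prev_cops_snoc: "xs \<noteq> [] \<Longrightarrow> prev_cops \<sigma> (xs @ [z]) = \<sigma> xs"
  by (simp add: prev_cops_def)

lemma consistent_hist_snoc: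
  assumes "consistent_hist V E \<sigma> xs" "E (last xs) z" "z \<notin> \<sigma> xs"
  shows "consistent_hist V E \<sigma> (xs @ [z])"
  unfolding consistent_hist_def
proof (intro conjI allI impI)
  have xs: "xs \<noteq> []" "xs ! 0 \<in> V"
    and old: "\<And>i. Suc i < length xs \<Longrightarrow> E (xs ! i) (xs ! Suc i) \<and> xs ! Suc i \<notin> \<sigma> (take (Suc i) xs)"
    using assms(1) by (auto simp: consistent_hist_def)
  then show "xs @ [z] \<noteq> []" "(xs @ [z]) ! 0 \<in> V"
    by (simp_all add: nth_append)
  fix i assume i: "Suc i < length (xs @ [z])"
  have "E ((xs @ [z]) ! i) ((xs @ [z]) ! Suc i) \<and> (xs @ [z]) ! Suc i \<notin> \<sigma> (take (Suc i) (xs @ [z]))"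
  proof (cases "Suc i < length xs")
    case True
    then show ?thesis using old[OF True] by (simp add: nth_append)
  next
    case False
    with i have "i = length xs - 1" by simp
    then show ?thesis using xs assms(2,3) by (simp add: nth_append last_conv_nth)
  qed
  then show "E ((xs @ [z]) ! i) ((xs @ [z]) ! Suc i)"
    "(xs @ [z]) ! Suc i \<notin> \<sigma> (take (Suc i) (xs @ [z]))" by simp_all
qed

lemma thief_escapes_by_invariant:
  fixes Safe :: "'a set \<Rightarrow> 'a \<Rightarrow> bool"
  assumes g: "graph V E" and legal: "legal_strategy V E k \<sigma>"
    and start: "x0 \<in> V" "\<And>C. cop_move k {} x0 C \<Longrightarrow> Safe C x0"
    and step: "\<And>C y. y \<in> V \<Longrightarrow> Safe C y \<Longrightarrow>
      \<exists>z. E y z \<and> z \<notin> C \<and> (\<forall>C'. cop_move k C z C' \<longrightarrow> Safe C' z)"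
  shows "thief_escapes V E \<sigma>"
proof -
  define move where "move C y = (SOME z. E y z \<and> z \<notin> C \<and> (\<forall>C'. cop_move k C z C' \<longrightarrow> Safe C' z))"
    for C y
  have move: "E y (move C y) \<and> move C y \<notin> C \<and> (\<forall>C'. cop_move k C (move C y) C' \<longrightarrow> Safe C' (move C y))"
    if "y \<in> V" "Safe C y" for C y
    unfolding move_def by (rule someI_ex[OF step[OF that]])
  define hist where "hist n = rec_nat [x0] (\<lambda>_ xs. xs @ [move (\<sigma> xs) (last xs)]) n" for n
  have hist_0: "hist 0 = [x0]"
    and hist_Suc: "hist (Suc n) = hist n @ [move (\<sigma> (hist n)) (last (hist n))]" for n
    by (simp_all add: hist_def)
  have hist_ne: "hist n \<noteq> []" for n
    by (cases n) (simp_all add: hist_0 hist_Suc)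
  have inv: "consistent_hist V E \<sigma> (hist n) \<and> last (hist n) \<in> V \<and> Safe (\<sigma> (hist n)) (last (hist n))" for n
  proof (induction n)
    case 0
    have "consistent_hist V E \<sigma> [x0]" using start(1) by (simp add: consistent_hist_def)
    moreover from legal[unfolded legal_strategy_def, rule_format, OF this]
    have "cop_move k {} x0 (\<sigma> [x0])" by (simp add: prev_cops_def)
    ultimately show ?case using start by (simp add: hist_0)
  next
    case (Suc n)
    let ?xs = "hist n"
    let ?z = "move (\<sigma> ?xs) (last ?xs)"
    from Suc.IH have hist_n: "consistent_hist V E \<sigma> ?xs"
      and pos: "last ?xs \<in> V" "Safe (\<sigma> ?xs) (last ?xs)" by simp_all
    from move[OF pos]
    have z: "E (last ?xs) ?z" "?z \<notin> \<sigma> ?xs" "\<forall>C'. cop_move k (\<sigma> ?xs) ?z C' \<longrightarrow> Safe C' ?z"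
      by simp_all
    have hist: "consistent_hist V E \<sigma> (?xs @ [?z])"
      using consistent_hist_snoc[OF hist_n z(1,2)] .
    from legal[unfolded legal_strategy_def, rule_format, OF this]
    have "cop_move k (\<sigma> ?xs) ?z (\<sigma> (?xs @ [?z]))" by (simp add: prev_cops_snoc[OF hist_ne])
    then show ?case
      using hist z(3) graph_edge_in[OF g z(1)] by (simp add: hist_Suc)
  qed
  define p where "p i = last (hist i)" for i
  have hist_p: "hist i = map p [0..<Suc i]" for i
    by (induction i) (simp_all add: p_def hist_0 hist_Suc)
  have "E (p i) (p (Suc i)) \<and> p (Suc i) \<notin> \<sigma> (map p [0..<Suc i])" for i
    unfolding hist_p[symmetric]
    using move[of "last (hist i)" "\<sigma> (hist i)"] inv[of i] by (simp add: p_def hist_Suc)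
  moreover have "p 0 \<in> V"
    using start(1) by (simp add: p_def hist_0)
  ultimately show ?thesis
    unfolding thief_escapes_def by blast
qed

section \<open>Escaping k cops\<close>

lemma neighbours_not_subset:
  assumes g: "graph V E" and fin: "finite C" and card: "card C \<le> card (neighbours E y)"
    and safe: "y \<in> C \<or> neighbours E y \<noteq> C"
  shows "\<not> neighbours E y \<subseteq> C"
proof
  assume sub: "neighbours E y \<subseteq> C"
  then have "card (neighbours E y) = card C"
    using card card_mono[OF fin sub] by simp
  then have "neighbours E y = C"
    using card_subset_eq[OF fin sub] by simp
  then show False
    using safe not_in_neighbours[OF g] by blast
qed

lemma molecule_centre_if_cornered:
  assumes g: "graph V E" and kc: "k_connected V E k"
    and C: "finite C" "card C = k" and y: "y \<in> C" and z0: "E y z0" "z0 \<notin> C"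
    and cornered: "\<And>z. E y z \<Longrightarrow> z \<notin> C \<Longrightarrow> neighbours E z = C"
  shows "molecule_centre V E k z0"
proof -
  txt \<open>Since y \<in> Enc, fewer than k cops lie outside Enc, and Enc \<union> Sat is closed under the
    edges of the connected graph left after removing them.\<close>
  define Sat where "Sat = {v \<in> V. neighbours E v = C}"
  define Enc where "Enc = {c \<in> C. neighbours E c \<subseteq> C \<union> Sat}"
  define U where "U = C - Enc"
  have z0_Sat: "z0 \<in> Sat"
    using cornered[OF z0] graph_edge_in[OF g z0(1)] by (simp add: Sat_def)
  have "C \<subseteq> V"
    using z0_Sat neighbours_subset[OF g, of z0] by (simp add: Sat_def)
  then have UV: "U \<subseteq> V" by (auto simp: U_def)
  have "y \<in> Enc"
    using y cornered graph_edge_in[OF g] by (auto simp: Enc_def Sat_def neighbours_def)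
  then have "U \<subset> C" using y by (auto simp: U_def)
  then have "card U < k" using psubset_card_mono[OF C(1)] C(2) by blast
  then have conn: "connected_on (V - U) E"
    using k_connected_connected_on[OF kc UV] by blast
  have "V - U \<subseteq> Enc \<union> Sat"
  proof (rule connected_on_subset_closed[OF conn])
    show "z0 \<in> V - U" "z0 \<in> Enc \<union> Sat"
      using z0_Sat z0(2) by (auto simp: Sat_def U_def)
    fix a b assume "a \<in> V - U" "a \<in> Enc \<union> Sat" "b \<in> V - U" "E a b"
    then have "b \<in> C \<union> Sat" "b \<notin> U"
      by (auto simp: Enc_def Sat_def neighbours_def)
    then show "b \<in> Enc \<union> Sat"
      by (auto simp: U_def)
  qed
  then have "\<forall>v\<in>V. v \<in> C \<or> neighbours E v = C"
    by (auto simp: U_def Enc_def Sat_def)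
  then show ?thesis
    using z0_Sat C(2) unfolding molecule_centre_def Sat_def by auto
qed

lemma thief_has_safe_move:
  assumes g: "graph V E" and kc: "k_connected V E k"
    and no_centre: "\<And>s. \<not> molecule_centre V E k s"
    and y: "y \<in> V" and C: "finite C" "card C \<le> k" and safe: "y \<in> C \<or> neighbours E y \<noteq> C"
  shows "\<exists>z. E y z \<and> z \<notin> C \<and> neighbours E z \<noteq> C"
proof -
  have deg: "k \<le> card (neighbours E v)" if "v \<in> V" for v
    using card_neighbours_ge[OF g kc that] .
  obtain z0 where z0: "E y z0" "z0 \<notin> C"
    using neighbours_not_subset[OF g C(1) _ safe] deg[OF y] C(2) by (auto simp: neighbours_def)
  show ?thesis
  proof (cases "y \<in> C")
    case False
    then have "neighbours E z0 \<noteq> C"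
      using graph_sym[OF g z0(1)] by (auto simp: neighbours_def)
    with z0 show ?thesis by blast
  next
    case y_C: True
    show ?thesis
    proof (cases "card C < k")
      case True
      then have "neighbours E z0 \<noteq> C"
        using deg graph_edge_in[OF g z0(1)] by fastforce
      with z0 show ?thesis by blast
    next
      case False
      show ?thesis
      proof (rule ccontr)
        assume "\<nexists>z. E y z \<and> z \<notin> C \<and> neighbours E z \<noteq> C"
        then have "\<And>z. E y z \<Longrightarrow> z \<notin> C \<Longrightarrow> neighbours E z = C" by blast
        from molecule_centre_if_cornered[OF g kc C(1) _ y_C z0 this]
        show False using False C(2) no_centre by simp
      qed
    qed
  qed
qed

lemma thief_escapes_without_centre:
  assumes g: "graph V E" and kc: "k_connected V E k" and k1: "1 \<le> k"
    and no_centre: "\<And>s. \<not> molecule_centre V E k s"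
    and legal: "legal_strategy V E k \<sigma>"
  shows "thief_escapes V E \<sigma>"
proof -
  let ?Safe = "\<lambda>C y. finite C \<and> card C \<le> k \<and> (y \<in> C \<or> neighbours E y \<noteq> C)"
  obtain x0 where x0: "x0 \<in> V"
    using k_connected_card[OF kc] by fastforce
  show ?thesis
  proof (rule thief_escapes_by_invariant[where Safe = ?Safe, OF g legal x0])
    fix C assume move: "cop_move k {} x0 C"
    have "neighbours E x0 \<noteq> {}"
      using card_neighbours_ge[OF g kc x0] k1 by auto
    then show "?Safe C x0"
      using cop_move_card_le[OF move] cop_move_cases[OF move] by auto
  next
    fix C y assume "y \<in> V" and safe: "?Safe C y"
    then obtain z where z: "E y z" "z \<notin> C" "neighbours E z \<noteq> C"
      using thief_has_safe_move[OF g kc no_centre] by blast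
    have "?Safe C' z" if move: "cop_move k C z C'" for C'
      using cop_move_cases[OF move] cop_move_card_le[OF move] safe z(3) by auto
    with z show "\<exists>z. E y z \<and> z \<notin> C \<and> (\<forall>C'. cop_move k C z C' \<longrightarrow> ?Safe C' z)"
      by blast
  qed
qed

section \<open>Enough cops always win\<close>

lemma consistent_hist_subset:
  assumes g: "graph V E" and h: "consistent_hist V E \<sigma> xs"
  shows "set xs \<subseteq> V"
proof
  fix x assume "x \<in> set xs"
  then obtain j where j: "j < length xs" "x = xs ! j" by (auto simp: in_set_conv_nth)
  show "x \<in> V"
  proof (cases j)
    case 0
    then show ?thesis using h j by (simp add: consistent_hist_def)
  next
    case (Suc i)
    then show ?thesis using h j graph_edge_in[OF g] by (auto simp: consistent_hist_def)
  qed
qed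

lemma consistent_hist_visited_distinct:
  assumes h: "consistent_hist V E set xs"
  shows "distinct xs"
proof -
  have "xs ! i \<noteq> xs ! j" if ij: "i < j" "j < length xs" for i j
  proof -
    obtain j' where j': "j = Suc j'" using less_imp_Suc_add[OF ij(1)] by blast
    have "xs ! i \<in> set (take (Suc j') xs)"
      using ij j' by (auto simp: in_set_conv_nth)
    moreover have "xs ! Suc j' \<notin> set (take (Suc j') xs)"
      using h ij(2) j' by (simp add: consistent_hist_def)
    ultimately show ?thesis using j' by metis
  qed
  then show ?thesis
    unfolding distinct_conv_nth by (metis linorder_neqE_nat)
qed

lemma legal_strategy_visited:
  assumes fin: "finite V" and g: "graph V E"
  shows "legal_strategy V E (card V) set"
  unfolding legal_strategy_def
proof (intro allI impI)
  fix xs assume h: "consistent_hist V E set xs"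
  then have ne: "xs \<noteq> []" by (simp add: consistent_hist_def)
  have prev: "prev_cops set xs = set (butlast xs)"
    using ne by (cases xs) (auto simp: prev_cops_def)
  have set_xs: "set xs = insert (last xs) (set (butlast xs))"
    using append_butlast_last_id[OF ne] by (metis Un_insert_right list.set(2) set_append sup_bot.right_neutral empty_set)
  have "card (set (butlast xs)) < card (set xs)"
    using consistent_hist_visited_distinct[OF h] ne by (simp add: distinct_card distinct_butlast)
  also have "\<dots> \<le> card V"
    using card_mono[OF fin consistent_hist_subset[OF g h]] .
  finally show "cop_move (card V) (prev_cops set xs) (last xs) (set xs)"
    using prev set_xs by (simp add: cop_move_def)
qed

lemma thief_caught_by_visited:
  assumes fin: "finite V" and g: "graph V E"
  shows "\<not> thief_escapes V E set"
proof
  assume "thief_escapes V E set"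
  then obtain p where p0: "p 0 \<in> V"
    and p: "\<And>i. E (p i) (p (Suc i)) \<and> p (Suc i) \<notin> set (map p [0..<Suc i])"
    unfolding thief_escapes_def by blast
  have "p i \<noteq> p j" if ij: "i < j" for i j
  proof -
    obtain j' where j': "j = Suc j'" using less_imp_Suc_add[OF ij] by blast
    have "p (Suc j') \<notin> p ` {0..<Suc j'}" using p[of j'] by (simp del: upt_Suc)
    moreover have "i \<in> {0..<Suc j'}" using ij j' by simp
    ultimately show ?thesis using j' by (metis image_eqI)
  qed
  then have "inj p" by (metis injI linorder_neqE_nat)
  moreover have "range p \<subseteq> V"
    using p0 p graph_edge_in[OF g] by (auto elim: nat.exhaust)
  ultimately have "finite (UNIV :: nat set)"
    using fin finite_subset finite_imageD by blast
  then show False by simp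
qed

lemma cops_win_card:
  assumes "finite V" "graph V E"
  shows "cops_win V E (card V)"
  using legal_strategy_visited[OF assms] thief_caught_by_visited[OF assms]
  unfolding cops_win_def by blast

theorem mainTheorem4:
  fixes V :: "'a set" and E :: "'a \<Rightarrow> 'a \<Rightarrow> bool" and k :: nat
  assumes "k \<ge> 1"
    and "finite V"
    and "graph V E"
    and "k_connected V E k"
    and "entanglement V E = k"
  shows "abstract_molecule V E k"
proof (cases "\<exists>s. molecule_centre V E k s")
  case True
  then show ?thesis
    using abstract_molecule_if_centre[OF assms(3,4,1)] by blast
next
  case False
  txt \<open>cops_win_card makes sure that the LEAST defining the entanglement is attained.\<close>
  have "cops_win V E (entanglement V E)"
    unfolding entanglement_def by (rule LeastI[where P = "cops_win V E", OF cops_win_card[OF assms(2,3)]])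
  then obtain \<sigma> where "legal_strategy V E k \<sigma>" "\<not> thief_escapes V E \<sigma>"
    using assms(5) by (auto simp: cops_win_def)
  with thief_escapes_without_centre[OF assms(3,4,1)] False show ?thesis
    by blast
qed

end
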